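(* Let $m\ge1$ be an integer, let $y\in(1,H]$ for some real $H>1$, and let $\theta_1,\ldots,\theta_m\in[0,\pi]$. Let \[ P(t)=(t-y)(t-y^{-1})\prod_{k=1}^m(t-e^{i\theta_k})(t-e^{-i\theta_k})=t^{2m+2}+a_1t^{2m+1}+\cdots+a_{m+1}t^{m+1}+\cdots+a_1t+1, \] and for indices $j>m+1$ write $a_j:=a_{2m+2-j}$ (so that $a_j$ is the coefficient of both $t^{j}$ and $t^{2m+2-j}$). Put $z_0:=y+y^{-1}$ and $z_k:=2\cos\theta_k$ for $1\le k\le m$. Then for $1\le i\le\lfloor m/2\rfloor+1$, \[ a_{2i-1}=-\sum_{j=0}^{i-1}\binom{m-2j}{i-j-1}\sum_{0\le k_1<\cdots<k_{2j+1}\le m}\ \prod_{s=1}^{2j+1}z_{k_s},\qquad a_{2i}=\sum_{j=0}^{i}\binom{m-2j+1}{i-j}\sum_{0\le k_1<\cdots<k_{2j}\le m}\ \prod_{s=1}^{2j}z_{k_s}. \] *)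

theory Defs
  imports Complex_Main "HOL-Computational_Algebra.Polynomial"
begin

definition palP :: "nat \<Rightarrow> real \<Rightarrow> (nat \<Rightarrow> real) \<Rightarrow> complex poly" where
  "palP m y \<theta> = [:- complex_of_real y, 1:] * [:- complex_of_real (1 / y), 1:] *
     (\<Prod>k\<in>{1..m}. [:- cis (\<theta> k), 1:] * [:- cis (- \<theta> k), 1:])"

definition acoef :: "nat \<Rightarrow> real \<Rightarrow> (nat \<Rightarrow> real) \<Rightarrow> nat \<Rightarrow> complex" where
  "acoef m y \<theta> j = (if j \<le> m + 1 then coeff (palP m y \<theta>) (2*m + 2 - j)
                     else coeff (palP m y \<theta>) j)"

definition zval :: "real \<Rightarrow> (nat \<Rightarrow> real) \<Rightarrow> nat \<Rightarrow> real" where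
  "zval y \<theta> k = (if k = 0 then y + 1 / y else 2 * cos (\<theta> k))"

definition esum :: "nat \<Rightarrow> real \<Rightarrow> (nat \<Rightarrow> real) \<Rightarrow> nat \<Rightarrow> real" where
  "esum m y \<theta> r = (\<Sum>S | S \<subseteq> {0..m} \<and> card S = r. \<Prod>k\<in>S. zval y \<theta> k)"

end

theory Submission
  imports Defs
begin

text \<open>Since y * (1/y) = 1 and cis \<theta> * cis (-\<theta>) = 1, the polynomial is the product of the
  self-reciprocal quadratics 1 - z_k t + t^2 for k = 0..m. Writing each factor as (1 + t^2) - z_k t
  and expanding over subsets of {0..m}, the coefficient of t^d is the sum over s of
  (-1)^s e_s times the coefficient of t^(d-s) in (1 + t^2)^(m+1-s), with e_s the elementary
  symmetric sum of the z_k. That inner coefficient is a binomial coefficient when d - s is even and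
  vanishes otherwise, so only the s of the same parity as d survive. Being a product of
  self-reciprocal factors, P is self-reciprocal, so the coefficients of t^(2m+2-d) and t^d agree.\<close>

definition elem_sym :: "'b set \<Rightarrow> ('b \<Rightarrow> 'a::comm_ring_1) \<Rightarrow> nat \<Rightarrow> 'a" where
  "elem_sym A w s = (\<Sum>S | S \<subseteq> A \<and> card S = s. \<Prod>k\<in>S. w k)"

lemma elem_sym_eq_0:
  assumes "finite A" "card A < s"
  shows "elem_sym A w s = 0"
proof -
  have "{S. S \<subseteq> A \<and> card S = s} = {}"
    using assms by (auto dest: card_mono)
  then show ?thesis
    unfolding elem_sym_def by (simp only: sum.empty)
qed

lemma of_real_elem_sym: "of_real (elem_sym A w s) = elem_sym A (\<lambda>k. of_real (w k)) s"
  by (simp add: elem_sym_def)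

lemma sum_atMost_double:
  fixes i :: nat
  shows "(\<Sum>s\<le>2*i. f s) = (\<Sum>j\<le>i. f (2*j)) + (\<Sum>j<i. f (2*j+1))"
  by (induction i) (simp_all add: algebra_simps)

lemma sum_atMost_Suc_double:
  "(\<Sum>s\<le>Suc (2*i). f s) = (\<Sum>j\<le>i. f (2*j)) + (\<Sum>j\<le>i. f (2*j+1))"
  unfolding sum.atMost_Suc sum_atMost_double by (simp add: add.assoc flip: lessThan_Suc_atMost)

lemma coeff_one_plus_square_power:
  "coeff ([:1, 0, 1:] ^ n :: 'a::comm_ring_1 poly) l =
    (if even l then of_nat (n choose (l div 2)) else 0)"
proof -
  have "([:1, 0, 1:] :: 'a poly) = monom 1 2 + 1"
    by (simp add: monom_altdef numeral_2_eq_2 one_pCons)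
  then have "([:1, 0, 1:] :: 'a poly) ^ n = (\<Sum>k\<le>n. monom (of_nat (n choose k)) (2*k))"
    by (simp add: binomial_ring monom_power power_mult of_nat_poly smult_monom)
  then show ?thesis
    by (auto simp: coeff_sum coeff_monom sum.delta' binomial_eq_0 elim!: evenE intro!: sum.neutral)
qed

lemma prod_monom_1:
  "finite X \<Longrightarrow>
    (\<Prod>k\<in>X. monom (c k) 1) = (monom (\<Prod>k\<in>X. c k) (card X) :: 'a::comm_semiring_1 poly)"
  by (induction X rule: finite_induct) (simp_all add: mult_monom)

lemma coeff_prod_reciprocal_quadratics:
  fixes w :: "'b \<Rightarrow> 'a::comm_ring_1"
  assumes "finite A"
  shows "coeff (\<Prod>k\<in>A. [:1, - w k, 1:]) d =
    (\<Sum>s\<le>d. (-1) ^ s * coeff ([:1, 0, 1:] ^ (card A - s)) (d - s) * elem_sym A w s)"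
proof -
  have fin: "finite X" if "X \<subseteq> A" for X
    using assms that finite_subset by blast
  have "(\<Prod>k\<in>A. [:1, - w k, 1:]) = (\<Prod>k\<in>A. monom (- w k) 1 + [:1, 0, 1:])"
    by (simp add: monom_altdef)
  also have "\<dots> = (\<Sum>X\<in>Pow A. monom (\<Prod>k\<in>X. - w k) (card X) * [:1, 0, 1:] ^ (card A - card X))"
    unfolding prod_add[OF assms]
    by (intro sum.cong) (simp_all add: prod_monom_1[simplified] fin card_Diff_subset)
  finally have "coeff (\<Prod>k\<in>A. [:1, - w k, 1:]) d = (\<Sum>X\<in>Pow A. if card X \<le> d then
      (-1) ^ card X * coeff ([:1, 0, 1:] ^ (card A - card X)) (d - card X) * (\<Prod>k\<in>X. w k) else 0)"
    by (auto simp: coeff_sum coeff_monom_mult prod_uminus fin intro!: sum.cong)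
  also have "\<dots> = (\<Sum>X\<in>{X \<in> Pow A. card X \<le> d}.
      (-1) ^ card X * coeff ([:1, 0, 1:] ^ (card A - card X)) (d - card X) * (\<Prod>k\<in>X. w k))"
    by (simp only: sum.inter_filter assms finite_Pow_iff)
  also have "\<dots> = (\<Sum>s\<le>d. (-1) ^ s * coeff ([:1, 0, 1:] ^ (card A - s)) (d - s) * elem_sym A w s)"
    by (subst sum.group[of _ "{..d}" card, symmetric])
      (auto simp: assms elem_sym_def sum_distrib_left intro!: sum.cong)
  finally show ?thesis .
qed

lemma coeff_prod_reciprocal_quadratics_even:
  fixes w :: "'b \<Rightarrow> 'a::comm_ring_1"
  assumes "finite A"
  shows "coeff (\<Prod>k\<in>A. [:1, - w k, 1:]) (2*i) =
    (\<Sum>j\<le>i. of_nat ((card A - 2*j) choose (i - j)) * elem_sym A w (2*j))"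
proof -
  have "odd (2*i - (2*j + 1))" if "j < i" for j
    using that by (simp add: even_diff_nat)
  moreover have "(2*i - 2*j) div 2 = i - j" for j
    by simp
  ultimately show ?thesis
    by (simp add: coeff_prod_reciprocal_quadratics[OF assms] sum_atMost_double
        coeff_one_plus_square_power)
qed

lemma coeff_prod_reciprocal_quadratics_odd:
  fixes w :: "'b \<Rightarrow> 'a::comm_ring_1"
  assumes "finite A"
  shows "coeff (\<Prod>k\<in>A. [:1, - w k, 1:]) (2*i + 1) =
    - (\<Sum>j\<le>i. of_nat ((card A - (2*j + 1)) choose (i - j)) * elem_sym A w (2*j + 1))"
proof -
  have "odd (2*i + 1 - 2*j)" if "j \<le> i" for j
    using that by (simp add: even_diff_nat)
  moreover have "(2*i - 2*j) div 2 = i - j" for j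
    by simp
  ultimately show ?thesis
    by (simp add: coeff_prod_reciprocal_quadratics[OF assms] sum_atMost_Suc_double
        coeff_one_plus_square_power sum_negf del: sum.atMost_Suc)
qed

lemma coeff_prod_reciprocal_quadratics_symmetric:
  fixes w :: "'b \<Rightarrow> 'a::idom"
  assumes "finite A" "d \<le> 2 * card A"
  shows "coeff (\<Prod>k\<in>A. [:1, - w k, 1:]) (2 * card A - d) =
    coeff (\<Prod>k\<in>A. [:1, - w k, 1:]) d"
proof -
  let ?P = "\<Prod>k\<in>A. [:1, - w k, 1:]"
  have "reflect_poly ?P = ?P"
    by (simp add: reflect_poly_prod reflect_poly_pCons)
  moreover have "degree ?P = 2 * card A"
    by (simp add: degree_prod_sum_eq)
  ultimately show ?thesis
    using assms(2) coeff_reflect_poly[of ?P d] by simp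
qed

lemma esum_eq_elem_sym: "esum m y \<theta> = elem_sym {0..m} (zval y \<theta>)"
  by (simp add: esum_def elem_sym_def fun_eq_iff)

lemma palP_eq_prod:
  assumes "y \<noteq> 0"
  shows "palP m y \<theta> = (\<Prod>k\<in>{0..m}. [:1, - complex_of_real (zval y \<theta> k), 1:])"
proof -
  have "[:- complex_of_real y, 1:] * [:- complex_of_real (1 / y), 1:] =
      [:1, - complex_of_real (zval y \<theta> 0), 1:]"
    using assms by (simp add: zval_def field_simps)
  moreover have "[:- cis (\<theta> k), 1:] * [:- cis (- \<theta> k), 1:] = [:1, - complex_of_real (zval y \<theta> k), 1:]"
    if "k \<ge> 1" for k
  proof -
    have "cis (\<theta> k) + cis (- \<theta> k) = complex_of_real (2 * cos (\<theta> k))"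
      by (simp add: complex_eq_iff)
    then show ?thesis
      using that by (simp add: zval_def algebra_simps cis_mult)
  qed
  moreover have "{0..m} = insert 0 {1..m}"
    by auto
  ultimately show ?thesis
    by (simp add: palP_def)
qed

lemma acoef_eq_coeff:
  assumes "y \<noteq> 0" "d \<le> 2*m + 2"
  shows "acoef m y \<theta> d = coeff (palP m y \<theta>) d"
  using coeff_prod_reciprocal_quadratics_symmetric
      [of "{0..m}" d "\<lambda>k. complex_of_real (zval y \<theta> k)"] assms
  by (simp add: acoef_def palP_eq_prod)

lemma acoef_odd:
  assumes "y \<noteq> 0" "1 \<le> i" "i \<le> m div 2 + 1"
  shows "acoef m y \<theta> (2*i - 1) =
    complex_of_real (- (\<Sum>j=0..i-1. (real_of_int (int m - 2 * int j) gchoose (i - j - 1))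
                          * esum m y \<theta> (2*j + 1)))"
proof -
  have "2*i - 1 = 2*(i - 1) + 1"
    using assms(2) by simp
  then have "acoef m y \<theta> (2*i - 1) = coeff (palP m y \<theta>) (2*(i - 1) + 1)"
    using assms by (simp add: acoef_eq_coeff)
  also have "\<dots> = - (\<Sum>j\<le>i - 1.
      complex_of_real (real ((m - 2*j) choose (i - 1 - j)) * esum m y \<theta> (2*j + 1)))"
    unfolding palP_eq_prod[OF assms(1)] coeff_prod_reciprocal_quadratics_odd[OF finite_atLeastAtMost]
    by (simp add: esum_eq_elem_sym of_real_elem_sym)
  also have "\<dots> = complex_of_real (- (\<Sum>j=0..i-1. (real_of_int (int m - 2 * int j) gchoose (i - j - 1))
                          * esum m y \<theta> (2*j + 1)))"
    unfolding of_real_minus of_real_sum atLeast0AtMost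
  proof (intro arg_cong[of _ _ uminus] sum.cong refl arg_cong[of _ _ complex_of_real])
    fix j
    assume "j \<in> {..i - 1}"
    then have "real_of_int (int m - 2 * int j) = real (m - 2*j)"
      using assms(3) by simp
    moreover have "i - j - 1 = i - 1 - j"
      by simp
    ultimately show "real ((m - 2*j) choose (i - 1 - j)) * esum m y \<theta> (2*j + 1)
        = (real_of_int (int m - 2 * int j) gchoose (i - j - 1)) * esum m y \<theta> (2*j + 1)"
      by (simp only: binomial_gbinomial)
  qed
  finally show ?thesis .
qed

lemma acoef_even:
  assumes "y \<noteq> 0" "i \<le> m div 2 + 1"
  shows "acoef m y \<theta> (2*i) =
    complex_of_real (\<Sum>j=0..i. (real_of_int (int m - 2 * int j + 1) gchoose (i - j))
                        * esum m y \<theta> (2*j))"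
proof -
  have "acoef m y \<theta> (2*i) = coeff (palP m y \<theta>) (2*i)"
    using assms by (simp add: acoef_eq_coeff)
  also have "\<dots> = (\<Sum>j\<le>i.
      complex_of_real (real ((m + 1 - 2*j) choose (i - j)) * esum m y \<theta> (2*j)))"
    unfolding palP_eq_prod[OF assms(1)] coeff_prod_reciprocal_quadratics_even[OF finite_atLeastAtMost]
    by (simp add: esum_eq_elem_sym of_real_elem_sym)
  also have "\<dots> = complex_of_real (\<Sum>j=0..i. (real_of_int (int m - 2 * int j + 1) gchoose (i - j))
                        * esum m y \<theta> (2*j))"
    unfolding of_real_sum atLeast0AtMost
  proof (intro sum.cong refl arg_cong[of _ _ complex_of_real])
    fix j
    show "real ((m + 1 - 2*j) choose (i - j)) * esum m y \<theta> (2*j)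
        = (real_of_int (int m - 2 * int j + 1) gchoose (i - j)) * esum m y \<theta> (2*j)"
    proof (cases "2*j \<le> m + 1")
      case True
      then have "real_of_int (int m - 2 * int j + 1) = real (m + 1 - 2*j)"
        by simp
      then show ?thesis
        by (simp only: binomial_gbinomial)
    next
      case False
      \<comment> \<open>\<open>m + 1 - 2*j\<close> truncates here, but then \<open>esum\<close> sums over no index sets at all.\<close>
      then show ?thesis
        by (simp add: esum_eq_elem_sym elem_sym_eq_0)
    qed
  qed
  finally show ?thesis .
qed

theorem lemma1:
  fixes m :: nat and y H :: real and \<theta> :: "nat \<Rightarrow> real" and i :: nat
  assumes "m \<ge> 1" and "H > 1" and "1 < y" and "y \<le> H"
    and "\<And>k. k \<in> {1..m} \<Longrightarrow> \<theta> k \<in> {0..pi}"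
    and "1 \<le> i" and "i \<le> m div 2 + 1"
  shows "acoef m y \<theta> (2*i - 1) =
           complex_of_real (- (\<Sum>j=0..i-1. (real_of_int (int m - 2 * int j) gchoose (i - j - 1))
                                  * esum m y \<theta> (2*j + 1)))
         \<and> acoef m y \<theta> (2*i) =
           complex_of_real (\<Sum>j=0..i. (real_of_int (int m - 2 * int j + 1) gchoose (i - j))
                                  * esum m y \<theta> (2*j))"
proof -
  \<comment> \<open>The identities are algebraic: of the hypotheses on \<open>y\<close>, \<open>H\<close>, \<open>\<theta>\<close> and \<open>m\<close>,
    only \<open>y \<noteq> 0\<close> is needed.\<close>
  have "y \<noteq> 0"
    using \<open>1 < y\<close> by simp
  then show ?thesis
    using acoef_odd[OF _ \<open>1 \<le> i\<close> \<open>i \<le> m div 2 + 1\<close>] acoef_even[OF _ \<open>i \<le> m div 2 + 1\<close>]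
    by blast
qed

end
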